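(* Let $r \in \mathbb{Z}$ and let $P_{n,k}=[x^n]\,\frac{1+rx^2}{1+x^2}\left(\frac{x}{1+x^2}\right)^k$ for $n,k\ge 0$. Then for all $n,k\ge 0$, $$P_{n,k}=\left(\binom{\frac{n+k}{2}}{k}-r \binom{\frac{n+k-2}{2}}{k}\right)(-1)^{\frac{n-k}{2}}\frac{1+(-1)^{n-k}}{2}+r\cdot 0^{n+k},$$ and $$P_{n,k}=\binom{\frac{n+k}{2}}{k}\left(1-\frac{r(n-k)}{n+k+0^{n+k}}\right)(-1)^{\frac{n-k}{2}}\frac{1+(-1)^{n-k}}{2},$$ where any expression carrying the factor $\frac{1+(-1)^{n-k}}{2}$ is interpreted as $0$ when $n-k$ is odd.
   Context: $[x^n]h(x)$ denotes the coefficient of $x^n$ in the power series $h(x)$. $0^m$ equals $1$ if $m=0$ and $0$ if $m>0$. For an integer $a$ and integer $k\ge 0$, $\binom{a}{k}=\frac{a(a-1)\cdots(a-k+1)}{k!}$ (so $\binom{-1}{0}=1$ and $\binom{a}{k}=0$ when $0\le a<k$). The numbers $P_{n,k}$ form the coefficient array (Riordan array $\left(\frac{1+rx^2}{1+x^2},\frac{x}{1+x^2}\right)$) of the restricted Chebyshev–Boubaker polynomials $P_n(x;r)=\sum_k P_{n,k}x^k$. *)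

theory Defs
  imports "HOL-Computational_Algebra.Formal_Power_Series"
begin

definition P :: "int \<Rightarrow> nat \<Rightarrow> nat \<Rightarrow> rat" where
  "P r n k = fps_nth ((1 + of_int r * fps_X ^ 2) / (1 + fps_X ^ 2)
                       * (fps_X / (1 + fps_X ^ 2)) ^ k) n"

end

theory Submission
  imports Defs
begin

text \<open>
  Since 1/(1+x^2) = \<Sum>j. (-1)^j x^(2j), the column x^k/(1+x^2)^(k+1) of the Riordan array
  (1/(1+x^2), x/(1+x^2)) has m-th coefficient U(m) = (-1)^((m-k)/2) C((m+k)/2, k) for even m+k
  (these are the coefficients of the Chebyshev polynomials U_m(x/2)). Multiplying by 1 + r x^2
  gives P(n,k) = U(n) + r U(n-2). Reading the closed form of U(n-2) also for n < 2 is wrong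
  only at n = k = 0, which the term r 0^(n+k) corrects. The second form follows from the first
  by the absorption identity (a-k) C(a,k) = a C(a-1,k).
\<close>

lemma fps_nth_one_plus_X_squared_mult:
  "fps_nth ((1 + fps_X ^ 2) * f) n = fps_nth f n + (if n < 2 then 0 else fps_nth f (n - 2))"
  by (simp add: distrib_right fps_X_power_mult_nth)

lemma fps_inverse_one_plus_X_squared:
  "inverse (1 + fps_X ^ 2 :: 'a::field fps) = Abs_fps (\<lambda>n. if even n then (-1) ^ (n div 2) else 0)"
proof (rule fps_inverse_unique, rule fps_ext)
  fix n
  show "fps_nth ((1 + fps_X ^ 2) * Abs_fps (\<lambda>n. if even n then (-1) ^ (n div 2) else 0)) n
          = fps_nth (1 :: 'a fps) n"
  proof (cases "n < 2")
    case False
    then obtain m where "n = Suc (Suc m)" by (metis add_2_eq_Suc le_add_diff_inverse not_less)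
    then show ?thesis by (cases "even m") (simp_all add: fps_nth_one_plus_X_squared_mult)
  qed (auto simp: fps_nth_one_plus_X_squared_mult less_2_cases_iff)
qed

lemma fps_nth_inverse_one_plus_X_squared_power:
  "fps_nth (inverse (1 + fps_X ^ 2 :: 'a::field fps) ^ Suc k) n
     = (if even n then (-1) ^ (n div 2) * of_nat ((k + n div 2) choose k) else 0)"
proof (induction k arbitrary: n)
  case 0
  show ?case by (simp add: fps_inverse_one_plus_X_squared)
next
  case (Suc k)
  define G where "G = inverse (1 + fps_X ^ 2 :: 'a fps)"
  have "(1 + fps_X ^ 2) * G ^ Suc (Suc k) = G ^ Suc k"
    by (simp add: G_def inverse_mult_eq_1' mult.assoc[symmetric])
  then have recurrence: "fps_nth (G ^ Suc (Suc k)) m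
      = fps_nth (G ^ Suc k) m - (if m < 2 then 0 else fps_nth (G ^ Suc (Suc k)) (m - 2))" for m
    by (metis fps_nth_one_plus_X_squared_mult add_diff_cancel_right')
  show ?case unfolding G_def[symmetric]
  proof (induction n rule: less_induct)
    case (less n)
    show ?case
    proof (cases "n < 2")
      case True
      then show ?thesis using recurrence[of n] Suc.IH[of n] by (auto simp: G_def less_2_cases_iff)
    next
      case False
      then obtain m where n: "n = Suc (Suc m)" by (metis add_2_eq_Suc le_add_diff_inverse not_less)
      have step: "fps_nth (G ^ Suc (Suc k)) n = fps_nth (G ^ Suc k) n - fps_nth (G ^ Suc (Suc k)) m"
        using recurrence[of n] n by simp
      show ?thesis
      proof (cases "even m")
        case True
        define j where "j = m div 2"
        have "(Suc k + Suc j choose Suc k) = (k + Suc j choose k) + (Suc k + j choose Suc k)"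
          using binomial_Suc_Suc[of "k + Suc j" k] by simp
        then have "(-1) ^ Suc j * (of_nat (k + Suc j choose k) :: 'a) - (-1) ^ j * of_nat (Suc k + j choose Suc k)
            = (-1) ^ Suc j * of_nat (Suc k + Suc j choose Suc k)"
          by (simp add: algebra_simps)
        then show ?thesis
          using step less.IH[of m] Suc.IH[of n, folded G_def] n True
          by (simp add: j_def del: binomial_Suc_Suc)
      qed (use step less.IH[of m] Suc.IH[of n, folded G_def] n in simp)
    qed
  qed
qed

definition chebyshev_U_coeff :: "nat \<Rightarrow> int \<Rightarrow> 'a::field_char_0" where
  "chebyshev_U_coeff k m =
     (if even (m + int k) then (-1) powi ((m - int k) div 2) * (of_int ((m + int k) div 2) gchoose k)
      else 0)"

lemma chebyshev_U_coeff_eq_0: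
  assumes "0 \<le> m + int k" "m < int k"
  shows "chebyshev_U_coeff k m = 0"
proof -
  obtain n where "(m + int k) div 2 = int n" "n < k"
    using assms by (intro that[of "nat ((m + int k) div 2)"]) auto
  then show ?thesis
    by (simp add: chebyshev_U_coeff_def binomial_gbinomial[symmetric])
qed

lemma fps_nth_X_power_mult_inverse_power:
  "fps_nth (fps_X ^ k * inverse (1 + fps_X ^ 2 :: 'a::field_char_0 fps) ^ Suc k) m
     = chebyshev_U_coeff k (int m)"
proof (cases "m < k")
  case True
  then show ?thesis by (simp add: fps_X_power_mult_nth chebyshev_U_coeff_eq_0)
next
  case False
  then obtain i where m: "m = k + i" using le_Suc_ex not_less by blast
  have "(int m + int k) div 2 = int (k + i div 2)" "(int m - int k) div 2 = int (i div 2)"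
    using m by auto
  then show ?thesis
    unfolding fps_X_power_mult_nth fps_nth_inverse_one_plus_X_squared_power
    using m by (simp add: chebyshev_U_coeff_def binomial_gbinomial)
qed

lemma chebyshev_U_coeff_below_zero:
  assumes "n < 2"
  shows "chebyshev_U_coeff k (int n - 2) = - (0 ^ (n + k))"
proof (cases "n + k = 0")
  case True
  then show ?thesis by (simp add: chebyshev_U_coeff_def)
next
  case False
  show ?thesis
  proof (cases "even (n + k)")
    case True
    then have "n + k \<ge> 2" using False by presburger
    then show ?thesis using False assms by (simp add: chebyshev_U_coeff_eq_0)
  qed (use False in \<open>simp add: chebyshev_U_coeff_def\<close>)
qed

lemma P_eq_chebyshev_U_coeff:
  "P r n k = chebyshev_U_coeff k (int n) + of_int r * chebyshev_U_coeff k (int n - 2)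
     + of_int r * 0 ^ (n + k)"
proof -
  define F where "F = fps_X ^ k * inverse (1 + fps_X ^ 2 :: rat fps) ^ Suc k"
  have "(1 + of_int r * fps_X ^ 2) / (1 + fps_X ^ 2) * (fps_X / (1 + fps_X ^ 2)) ^ k
      = F + fps_const (of_int r) * (fps_X ^ 2 * F)"
    by (simp add: F_def fps_divide_unit power_mult_distrib fps_of_int[symmetric] algebra_simps
        del: fps_of_int)
  then have "P r n k = fps_nth F n + of_int r * (if n < 2 then 0 else fps_nth F (n - 2))"
    by (simp add: P_def fps_X_power_mult_nth)
  then show ?thesis
    unfolding F_def fps_nth_X_power_mult_inverse_power
    by (cases "n < 2") (auto simp: of_nat_diff chebyshev_U_coeff_below_zero)
qed

lemma P_eq_gbinomial:
  assumes "even (n + k)"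
  defines "a \<equiv> (int n + int k) div 2"
  shows "P r n k = ((of_int a gchoose k) - of_int r * (of_int (a - 1) gchoose k))
      * (-1) powi ((int n - int k) div 2) + of_int r * 0 ^ (n + k)"
proof -
  have "(int n - 2 - int k) div 2 = (int n - int k) div 2 - 1" "(int n - 2 + int k) div 2 = a - 1"
    using assms by (auto elim!: evenE)
  then have "chebyshev_U_coeff k (int n - 2)
      = - ((-1) powi ((int n - int k) div 2) * (of_int (a - 1) gchoose k :: rat))"
    using assms(1) by (simp add: chebyshev_U_coeff_def power_int_diff)
  then show ?thesis
    using assms by (simp add: P_eq_chebyshev_U_coeff chebyshev_U_coeff_def algebra_simps)
qed

lemma gbinomial_absorb_comp_divide:
  fixes a c :: "'a::field_char_0"
  assumes "a \<noteq> 0"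
  shows "(a gchoose k) * (1 - c * (a - of_nat k) / a) = (a gchoose k) - c * ((a - 1) gchoose k)"
proof -
  have "(a gchoose k) * (a - of_nat k) / a = (a - 1) gchoose k"
    using gbinomial_absorb_comp[of a k] assms by (simp add: field_simps)
  moreover have "(a gchoose k) * (1 - c * (a - of_nat k) / a)
      = (a gchoose k) - c * ((a gchoose k) * (a - of_nat k) / a)"
    by (simp add: algebra_simps)
  ultimately show ?thesis by simp
qed

text \<open>The summand \<open>0 ^ (n + k)\<close> is only there to avoid a zero denominator; for \<open>n = k = 0\<close>
  both sides are \<open>0\<close> because \<open>x / 0 = 0\<close>.\<close>

lemma diff_divide_sum_eq_half:
  assumes "even (n + k)"
  shows "(of_int (int n - int k) / (of_nat (n + k) + 0 ^ (n + k)) :: 'a::field_char_0)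
      = (of_int ((int n + int k) div 2) - of_nat k) / of_int ((int n + int k) div 2)"
proof (cases "n + k = 0")
  case False
  obtain a where a: "n + k = 2 * a" using assms by blast
  then have n: "of_nat n = (2 * of_nat a - of_nat k :: 'a)"
    by (metis add_diff_cancel_right' of_nat_add of_nat_mult of_nat_numeral)
  have zero: "(0 :: 'a) ^ (n + k) = 0" using False by simp
  have "(int n + int k) div 2 = int a" "of_nat a \<noteq> (0 :: 'a)"
    using a False by simp_all
  then show ?thesis unfolding zero by (simp add: n field_simps)
qed simp

lemma P_eq_gbinomial_ratio:
  assumes "even (n + k)"
  defines "a \<equiv> (int n + int k) div 2"
  shows "P r n k = (of_int a gchoose k)
      * (1 - of_int r * of_int (int n - int k) / (of_nat (n + k) + 0 ^ (n + k)))
      * (-1) powi ((int n - int k) div 2)"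
proof (cases "n + k = 0")
  case False
  have "of_int (int n - int k) / (of_nat (n + k) + 0 ^ (n + k)) = (of_int a - of_nat k) / (of_int a :: rat)"
    unfolding a_def by (rule diff_divide_sum_eq_half[OF assms(1)])
  then have ratio: "of_int r * of_int (int n - int k) / (of_nat (n + k) + 0 ^ (n + k))
      = of_int r * (of_int a - of_nat k) / (of_int a :: rat)"
    by (metis times_divide_eq_right)
  have "n + k \<ge> 2" using False assms(1) by presburger
  then have "(0 :: rat) ^ (n + k) = 0" "of_int a \<noteq> (0 :: rat)"
    by (auto simp: a_def div_eq_0_iff)
  then show ?thesis
    unfolding ratio
    using assms by (simp add: P_eq_gbinomial gbinomial_absorb_comp_divide)
qed (simp add: P_eq_gbinomial)

theorem mainTheorem2:
  fixes r :: int and n k :: nat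
  shows "(P r n k =
           (if even (n + k) then
              ((of_int ((int n + int k) div 2) gchoose k)
                 - of_int r * (of_int ((int n + int k - 2) div 2) gchoose k))
              * (-1) powi ((int n - int k) div 2)
              * ((1 + (-1) powi (int n - int k)) / 2)
            else 0)
           + of_int r * 0 ^ (n + k)) \<and>
         P r n k =
           (if even (n + k) then
              (of_int ((int n + int k) div 2) gchoose k)
              * (1 - of_int r * of_int (int n - int k) / (of_nat (n + k) + 0 ^ (n + k)))
              * (-1) powi ((int n - int k) div 2)
              * ((1 + (-1) powi (int n - int k)) / 2)
            else 0)"
proof (cases "even (n + k)")
  case False
  then have "n + k \<noteq> 0" by presburger
  with False show ?thesis by (simp add: P_eq_chebyshev_U_coeff chebyshev_U_coeff_def)
next
  case True
  have "(int n + int k - 2) div 2 = (int n + int k) div 2 - 1"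
    "(1 + (-1 :: rat) powi (int n - int k)) / 2 = 1"
    using True by (auto elim!: evenE)
  then show ?thesis
    using P_eq_gbinomial[OF True] P_eq_gbinomial_ratio[OF True] True by simp
qed

end
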